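(* For any acyclic hypergraph $\mathcal{H}$, $\kappa(\mathcal{H})=\rho^*(\mathcal{H})$.
   Context: A hypergraph $\mathcal{H}=(V,E)$ (with $V=\bigcup_{e\in E}e$) is acyclic ($\alpha$-acyclic) if it admits a join tree: a tree whose nodes are the edges of $E$ such that for every vertex $v$, the nodes containing $v$ form a connected subtree. For $S\subseteq V$, $\mathcal{H}[S]$ is the hypergraph with vertex set $S$ and edge set $\{S\cap e : e\in E,\ S\cap e\neq\emptyset\}$. $\mathsf{red}(\mathcal{H})$ is obtained by removing every edge $e$ for which there is another edge $e'\neq e$ with $e\subseteq e'$. $\tau^*$ is the value of a maximum fractional edge packing (equivalently, minimum fractional vertex cover) and $\rho^*$ the value of a minimum fractional edge cover. $\kappa(\mathcal{H})=\max_{S\subseteq V}\tau^*(\mathsf{red}(\mathcal{H}[S]))$. *)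

theory Defs
  imports Complex_Main
begin

text \<open>A hypergraph is represented by its edge set E; its vertex set is the union of E.\<close>

definition hverts :: "'a set set \<Rightarrow> 'a set" where
  "hverts E = \<Union>E"

definition connected_in :: "'n set set \<Rightarrow> 'n set \<Rightarrow> bool" where
  "connected_in T X \<longleftrightarrow>
     (\<forall>x\<in>X. \<forall>y\<in>X. (x, y) \<in> {(a, b). {a, b} \<in> T \<and> a \<in> X \<and> b \<in> X}\<^sup>*)"

definition is_tree :: "'n set \<Rightarrow> 'n set set \<Rightarrow> bool" where
  "is_tree N T \<longleftrightarrow>
     finite N \<and>
     T \<subseteq> {{a, b} | a b. a \<in> N \<and> b \<in> N \<and> a \<noteq> b} \<and>
     connected_in T N \<and>
     (N \<noteq> {} \<longrightarrow> card T + 1 = card N)"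

definition join_tree :: "'a set set \<Rightarrow> 'a set set set \<Rightarrow> bool" where
  "join_tree E T \<longleftrightarrow> is_tree E T \<and>
     (\<forall>v\<in>hverts E. connected_in T {e\<in>E. v \<in> e})"

definition alpha_acyclic :: "'a set set \<Rightarrow> bool" where
  "alpha_acyclic E \<longleftrightarrow> (\<exists>T. join_tree E T)"

definition induced :: "'a set set \<Rightarrow> 'a set \<Rightarrow> 'a set set" where
  "induced E S = {S \<inter> e | e. e \<in> E \<and> S \<inter> e \<noteq> {}}"

definition red :: "'a set set \<Rightarrow> 'a set set" where
  "red E = {e \<in> E. \<not> (\<exists>e'\<in>E. e' \<noteq> e \<and> e \<subseteq> e')}"

definition frac_edge_packing :: "'a set set \<Rightarrow> ('a set \<Rightarrow> real) \<Rightarrow> bool" where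
  "frac_edge_packing E w \<longleftrightarrow>
     (\<forall>e\<in>E. 0 \<le> w e) \<and> (\<forall>v\<in>hverts E. (\<Sum>e\<in>{e\<in>E. v \<in> e}. w e) \<le> 1)"

definition frac_edge_cover :: "'a set set \<Rightarrow> ('a set \<Rightarrow> real) \<Rightarrow> bool" where
  "frac_edge_cover E w \<longleftrightarrow>
     (\<forall>e\<in>E. 0 \<le> w e) \<and> (\<forall>v\<in>hverts E. 1 \<le> (\<Sum>e\<in>{e\<in>E. v \<in> e}. w e))"

definition tau_star :: "'a set set \<Rightarrow> real" where
  "tau_star E = Sup {(\<Sum>e\<in>E. w e) | w. frac_edge_packing E w}"

definition rho_star :: "'a set set \<Rightarrow> real" where
  "rho_star E = Inf {(\<Sum>e\<in>E. w e) | w. frac_edge_cover E w}"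

definition kappa :: "'a set set \<Rightarrow> real" where
  "kappa E = Max {tau_star (red (induced E S)) | S. S \<subseteq> hverts E}"

end

theory Submission
  imports Defs
begin

text \<open>Both inequalities are witnessed by a strongly independent vertex set \<open>I\<close> (no edge
  contains two of its vertices); weak LP duality gives \<open>|I| \<le> \<rho>*(H)\<close>.
  For \<open>\<kappa>(H) \<le> \<rho>*(H)\<close>: for every \<open>S\<close> there is such an \<open>I \<subseteq> S\<close> meeting every
  maximal edge of \<open>H[S]\<close>, i.e. a vertex cover of \<open>red(H[S])\<close>, so
  \<open>\<tau>*(red(H[S])) \<le> |I| \<le> \<rho>*(H)\<close>.
  For \<open>\<rho>*(H) \<le> \<kappa>(H)\<close>: there is such an \<open>I\<close> together with an edge cover \<open>C\<close> of \<open>H\<close> with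
  \<open>|C| \<le> |I|\<close>; as \<open>H[I]\<close> consists of the singletons of \<open>I\<close>,
  \<open>\<rho>*(H) \<le> |C| \<le> |I| = \<tau>*(red(H[I]))\<close>.
  Both sets are built by removing the leaves of a join tree one at a time.\<close>

section \<open>Leaves of trees\<close>

definition adjacent_in :: "'n set set \<Rightarrow> 'n set \<Rightarrow> ('n \<times> 'n) set" where
  "adjacent_in T X = {(a, b). {a, b} \<in> T \<and> a \<in> X \<and> b \<in> X}"

lemma connected_in_iff: "connected_in T X \<longleftrightarrow> (\<forall>x\<in>X. \<forall>y\<in>X. (x, y) \<in> (adjacent_in T X)\<^sup>*)"
  by (simp add: connected_in_def adjacent_in_def)

lemma connected_in_empty [simp]: "connected_in T {}"
  by (simp add: connected_in_def)

lemma rtrancl_adjacent_in_remove_leaf: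
  assumes "(x, y) \<in> (adjacent_in T X)\<^sup>*" "x \<noteq> e" "e \<noteq> f" "\<forall>t\<in>T. e \<in> t \<longrightarrow> t = {e, f}"
  shows "y \<noteq> e \<and> (x, y) \<in> (adjacent_in (T - {{e, f}}) (X - {e}))\<^sup>*
    \<or> y = e \<and> f \<in> X \<and> (x, f) \<in> (adjacent_in (T - {{e, f}}) (X - {e}))\<^sup>*"
  using assms(1)
proof (induction rule: rtrancl_induct)
  case base
  then show ?case using assms(2) by simp
next
  case (step y z)
  have yz: "{y, z} \<in> T" "y \<in> X" "z \<in> X"
    using step.hyps(2) by (auto simp: adjacent_in_def)
  from step.IH show ?case
  proof
    assume y: "y \<noteq> e \<and> (x, y) \<in> (adjacent_in (T - {{e, f}}) (X - {e}))\<^sup>*"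
    show ?case
    proof (cases "z = e")
      case True
      then have "y = f" using yz assms(4) y by (auto simp: doubleton_eq_iff)
      then show ?thesis using True y yz by auto
    next
      case False
      then have "(y, z) \<in> adjacent_in (T - {{e, f}}) (X - {e})"
        using yz y by (auto simp: adjacent_in_def doubleton_eq_iff)
      then show ?thesis using y False by (meson rtrancl.rtrancl_into_rtrancl)
    qed
  next
    assume "y = e \<and> f \<in> X \<and> (x, f) \<in> (adjacent_in (T - {{e, f}}) (X - {e}))\<^sup>*"
    moreover have "z = f" using calculation yz assms(3,4) by (auto simp: doubleton_eq_iff)
    ultimately show ?case using assms(3) by auto
  qed
qed

lemma connected_in_remove_leaf:
  assumes "connected_in T X" "e \<noteq> f" "\<forall>t\<in>T. e \<in> t \<longrightarrow> t = {e, f}"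
  shows "connected_in (T - {{e, f}}) (X - {e})"
  unfolding connected_in_iff
proof (intro ballI)
  fix x y assume "x \<in> X - {e}" "y \<in> X - {e}"
  moreover have "(x, y) \<in> (adjacent_in T X)\<^sup>*"
    using assms(1) calculation by (auto simp: connected_in_iff)
  ultimately show "(x, y) \<in> (adjacent_in (T - {{e, f}}) (X - {e}))\<^sup>*"
    using rtrancl_adjacent_in_remove_leaf[OF _ _ assms(2,3)] by blast
qed

lemma connected_in_leaf_neighbour:
  assumes "connected_in T X" "e \<noteq> f" "\<forall>t\<in>T. e \<in> t \<longrightarrow> t = {e, f}"
    and "g \<in> X" "e \<in> X" "g \<noteq> e"
  shows "f \<in> X"
  using assms rtrancl_adjacent_in_remove_leaf[of g e T X e f] by (auto simp: connected_in_iff)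

lemma finite_edges:
  assumes "finite N" "T \<subseteq> {{a, b} | a b. a \<in> N \<and> b \<in> N \<and> a \<noteq> b}"
  shows "finite T"
proof -
  have "T \<subseteq> Pow N" using assms(2) by auto
  then show ?thesis using assms(1) by (simp add: finite_subset)
qed

lemma tree_degree_sum:
  assumes "finite N" "T \<subseteq> {{a, b} | a b. a \<in> N \<and> b \<in> N \<and> a \<noteq> b}"
  shows "(\<Sum>n\<in>N. card {t\<in>T. n \<in> t}) = 2 * card T"
proof -
  have "finite T" using finite_edges[OF assms] .
  have "(\<Sum>n\<in>N. card {t\<in>T. n \<in> t}) = (\<Sum>n\<in>N. \<Sum>t\<in>{t\<in>T. n \<in> t}. 1)" by simp
  also have "\<dots> = (\<Sum>t\<in>T. \<Sum>n\<in>{n\<in>N. n \<in> t}. 1)"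
    using \<open>finite T\<close> assms(1) by (intro sum.swap_restrict)
  also have "\<dots> = (\<Sum>t\<in>T. 2)"
  proof (rule sum.cong)
    fix t assume "t \<in> T"
    then obtain a b where "t = {a, b}" "a \<in> N" "b \<in> N" "a \<noteq> b" using assms(2) by blast
    then have "{n\<in>N. n \<in> t} = {a, b}" by auto
    then show "(\<Sum>n\<in>{n\<in>N. n \<in> t}. 1) = (2::nat)" using \<open>a \<noteq> b\<close> by simp
  qed simp
  finally show ?thesis by simp
qed

lemma tree_has_leaf:
  assumes "is_tree N T" "2 \<le> card N"
  obtains e f where "e \<in> N" "f \<in> N" "e \<noteq> f" "{e, f} \<in> T" "\<forall>t\<in>T. e \<in> t \<longrightarrow> t = {e, f}"
proof -
  have fin: "finite N" and sub: "T \<subseteq> {{a, b} | a b. a \<in> N \<and> b \<in> N \<and> a \<noteq> b}"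
    and con: "connected_in T N" and card_T: "card T + 1 = card N"
    using assms by (auto simp: is_tree_def)
  have incident: "{t\<in>T. n \<in> t} \<noteq> {}" if "n \<in> N" for n
  proof -
    have "N \<noteq> {n}" using assms(2) by auto
    then obtain m where "m \<in> N" "m \<noteq> n" using \<open>n \<in> N\<close> by blast
    then have "(n, m) \<in> (adjacent_in T N)\<^sup>*" using con \<open>n \<in> N\<close> by (auto simp: connected_in_iff)
    then obtain k where "(n, k) \<in> adjacent_in T N" using \<open>m \<noteq> n\<close> by (metis converse_rtranclE)
    then show ?thesis by (auto simp: adjacent_in_def)
  qed
  have "finite T" using finite_edges[OF fin sub] .
  have "\<exists>n\<in>N. card {t\<in>T. n \<in> t} < 2"
  proof (rule ccontr)
    assume "\<not> ?thesis"
    then have "(\<Sum>n\<in>N. 2) \<le> (\<Sum>n\<in>N. card {t\<in>T. n \<in> t})" by (intro sum_mono) auto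
    then show False using tree_degree_sum[OF fin sub] card_T by simp
  qed
  then obtain e where "e \<in> N" "card {t\<in>T. e \<in> t} < 2" ..
  moreover have "card {t\<in>T. e \<in> t} \<noteq> 0"
    using incident[OF \<open>e \<in> N\<close>] \<open>finite T\<close> by simp
  ultimately have "card {t\<in>T. e \<in> t} = 1" by linarith
  then obtain t where t: "{t'\<in>T. e \<in> t'} = {t}" by (meson card_1_singletonE)
  then have "t \<in> T" "e \<in> t" by auto
  then obtain a b where "t = {a, b}" "a \<in> N" "b \<in> N" "a \<noteq> b" using sub by blast
  then obtain f where "t = {e, f}" "f \<in> N" "e \<noteq> f" using \<open>e \<in> t\<close> by auto
  moreover have "\<forall>t'\<in>T. e \<in> t' \<longrightarrow> t' = t" using t by blast
  ultimately show ?thesis using that \<open>e \<in> N\<close> \<open>t \<in> T\<close> by metis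
qed

lemma is_tree_remove_leaf:
  assumes "is_tree N T" "e \<in> N" "e \<noteq> f" "{e, f} \<in> T" "\<forall>t\<in>T. e \<in> t \<longrightarrow> t = {e, f}"
  shows "is_tree (N - {e}) (T - {{e, f}})"
proof -
  have fin: "finite N" and sub: "T \<subseteq> {{a, b} | a b. a \<in> N \<and> b \<in> N \<and> a \<noteq> b}"
    and con: "connected_in T N" and card_T: "card T + 1 = card N"
    using assms by (auto simp: is_tree_def)
  have "finite T" using finite_edges[OF fin sub] .
  have "card T > 0" using assms(4) \<open>finite T\<close> card_gt_0_iff by blast
  then have "card (T - {{e, f}}) + 1 = card (N - {e})"
    using card_T assms(2,4) fin by (simp add: card_Diff_singleton)
  moreover have "T - {{e, f}} \<subseteq> {{a, b} | a b. a \<in> N - {e} \<and> b \<in> N - {e} \<and> a \<noteq> b}"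
  proof
    fix t assume t: "t \<in> T - {{e, f}}"
    then obtain a b where "t = {a, b}" "a \<in> N" "b \<in> N" "a \<noteq> b" using sub by blast
    moreover have "e \<notin> t" using t assms(5) by auto
    ultimately show "t \<in> {{a, b} | a b. a \<in> N - {e} \<and> b \<in> N - {e} \<and> a \<noteq> b}" by blast
  qed
  ultimately show ?thesis
    using fin connected_in_remove_leaf[OF con assms(3,5)] by (simp add: is_tree_def)
qed

section \<open>Reduction and induced subhypergraphs\<close>

lemma red_subset: "red F \<subseteq> F"
  unfolding red_def by blast

lemma red_Diff_empty: "red (F - {{}}) \<subseteq> red F"
  unfolding red_def by blast

lemma red_mono_member:
  assumes "X \<in> red F" "X \<in> G" "G \<subseteq> F"
  shows "X \<in> red G"
  using assms by (auto simp: red_def)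

lemma red_singletons: "red ((\<lambda>t. {t}) ` I) = (\<lambda>t. {t}) ` I"
  by (auto simp: red_def)

lemma induced_conv_image: "induced E S = (\<lambda>e. S \<inter> e) ` E - {{}}"
  unfolding induced_def by blast

lemma red_induced_subset: "red (induced E S) \<subseteq> red ((\<lambda>e. S \<inter> e) ` E) - {{}}"
proof -
  have "red (induced E S) = red ((\<lambda>e. S \<inter> e) ` E - {{}})" by (simp only: induced_conv_image)
  then show ?thesis using red_subset[of "(\<lambda>e. S \<inter> e) ` E - {{}}"] red_Diff_empty by blast
qed

text \<open>Meant for finite \<open>I\<close> only (\<open>card\<close> of an infinite set is \<open>0\<close>); every use
  assumes \<open>finite I\<close>.\<close>

definition strongly_independent :: "'a set \<Rightarrow> 'a set set \<Rightarrow> bool" where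
  "strongly_independent I F \<longleftrightarrow> (\<forall>X\<in>F. card (I \<inter> X) \<le> 1)"

lemma induced_strongly_independent_eq_singletons:
  assumes "finite I" "I \<subseteq> hverts E" "strongly_independent I E"
  shows "induced E I = (\<lambda>t. {t}) ` I"
proof -
  have single: "I \<inter> e = {t}" if "e \<in> E" "t \<in> I" "t \<in> e" for e t
  proof -
    have "card (I \<inter> e) \<le> Suc 0" using assms(3) that(1) by (simp add: strongly_independent_def)
    then have "\<forall>a\<in>I \<inter> e. \<forall>b\<in>I \<inter> e. a = b" using assms(1) by (simp add: card_le_Suc0_iff_eq)
    then show ?thesis using that(2,3) by blast
  qed
  show ?thesis
  proof
    show "induced E I \<subseteq> (\<lambda>t. {t}) ` I"
    proof
      fix X assume "X \<in> induced E I"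
      then obtain e t where "e \<in> E" "X = I \<inter> e" "t \<in> I" "t \<in> e" by (auto simp: induced_def)
      then show "X \<in> (\<lambda>t. {t}) ` I" using single by blast
    qed
    show "(\<lambda>t. {t}) ` I \<subseteq> induced E I"
    proof
      fix X assume "X \<in> (\<lambda>t. {t}) ` I"
      then obtain t where "t \<in> I" "X = {t}" by blast
      moreover obtain e where "e \<in> E" "t \<in> e" using assms(2) \<open>t \<in> I\<close> by (auto simp: hverts_def)
      ultimately show "X \<in> induced E I" using single unfolding induced_def by blast
    qed
  qed
qed

section \<open>Join trees of labelled families\<close>

text \<open>Join trees whose nodes carry labels instead of being the edges themselves: labels may
  coincide or be empty, so restricting every label to a vertex set \<open>S\<close>, as \<open>H[S]\<close> does,
  keeps the join tree.\<close>

definition has_join_tree :: "'n set \<Rightarrow> ('n \<Rightarrow> 'a set) \<Rightarrow> bool" where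
  "has_join_tree N lab \<longleftrightarrow> (\<exists>T. is_tree N T \<and> (\<forall>v. connected_in T {n\<in>N. v \<in> lab n}))"

lemma alpha_acyclic_has_join_tree:
  assumes "alpha_acyclic E"
  shows "has_join_tree E id"
proof -
  obtain T where T: "join_tree E T" using assms by (auto simp: alpha_acyclic_def)
  have "connected_in T {e\<in>E. v \<in> e}" for v
  proof (cases "v \<in> hverts E")
    case False
    then have "{e\<in>E. v \<in> e} = {}" by (auto simp: hverts_def)
    then show ?thesis by (metis connected_in_empty)
  qed (use T in \<open>simp add: join_tree_def\<close>)
  then show ?thesis using T by (auto simp: has_join_tree_def join_tree_def)
qed

lemma has_join_tree_restrict:
  assumes "has_join_tree N lab"
  shows "has_join_tree N (\<lambda>n. S \<inter> lab n)"
proof -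
  obtain T where T: "is_tree N T" "\<forall>v. connected_in T {n\<in>N. v \<in> lab n}"
    using assms by (auto simp: has_join_tree_def)
  have "connected_in T {n\<in>N. v \<in> S \<inter> lab n}" for v
    using T(2) by (cases "v \<in> S") simp_all
  then show ?thesis using T(1) by (auto simp: has_join_tree_def)
qed

lemma has_join_tree_remove_leaf:
  assumes "has_join_tree N lab" "2 \<le> card N"
  obtains e f where "e \<in> N" "f \<in> N" "e \<noteq> f" "has_join_tree (N - {e}) lab"
    "lab e \<inter> \<Union>(lab ` (N - {e})) \<subseteq> lab f"
proof -
  obtain T where T: "is_tree N T" "\<forall>v. connected_in T {n\<in>N. v \<in> lab n}"
    using assms by (auto simp: has_join_tree_def)
  obtain e f where ef: "e \<in> N" "f \<in> N" "e \<noteq> f" "{e, f} \<in> T" "\<forall>t\<in>T. e \<in> t \<longrightarrow> t = {e, f}"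
    using tree_has_leaf[OF T(1) assms(2)] .
  have "connected_in (T - {{e, f}}) {n\<in>N - {e}. v \<in> lab n}" for v
  proof -
    have "{n\<in>N - {e}. v \<in> lab n} = {n\<in>N. v \<in> lab n} - {e}" by blast
    then show ?thesis using connected_in_remove_leaf[OF T(2)[rule_format, of v] ef(3,5)] by simp
  qed
  then have "has_join_tree (N - {e}) lab"
    using is_tree_remove_leaf[OF T(1) ef(1,3-5)] by (auto simp: has_join_tree_def)
  moreover have "lab e \<inter> \<Union>(lab ` (N - {e})) \<subseteq> lab f"
  proof
    fix v assume "v \<in> lab e \<inter> \<Union>(lab ` (N - {e}))"
    then obtain g where "g \<in> N - {e}" "v \<in> lab g" "v \<in> lab e" by blast
    then show "v \<in> lab f"
      using connected_in_leaf_neighbour[OF T(2)[rule_format, of v] ef(3,5)] ef(1) by auto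
  qed
  ultimately show ?thesis using that ef(1-3) by blast
qed

lemma has_join_tree_induct [consumes 2, case_names empty singleton leaf]:
  assumes "finite N" "has_join_tree N lab"
    and "\<And>lab. P {} lab"
    and "\<And>n lab. P {n} lab"
    and "\<And>N lab e f. finite N \<Longrightarrow> e \<in> N \<Longrightarrow> f \<in> N \<Longrightarrow> e \<noteq> f \<Longrightarrow>
      has_join_tree (N - {e}) lab \<Longrightarrow> lab e \<inter> \<Union>(lab ` (N - {e})) \<subseteq> lab f \<Longrightarrow>
      (\<And>lab'. has_join_tree (N - {e}) lab' \<Longrightarrow> P (N - {e}) lab') \<Longrightarrow> P N lab"
  shows "P N lab"
  using assms(1,2)
proof (induction N arbitrary: lab rule: finite_psubset_induct)
  case (psubset N)
  have "card N = 0 \<or> card N = 1 \<or> 2 \<le> card N" by linarith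
  then consider "N = {}" | n where "N = {n}" | "2 \<le> card N"
    using psubset.hyps by (auto simp: card_1_singleton_iff)
  then show ?case
  proof cases
    case 3
    obtain e f where "e \<in> N" "f \<in> N" "e \<noteq> f" "has_join_tree (N - {e}) lab"
      "lab e \<inter> \<Union>(lab ` (N - {e})) \<subseteq> lab f"
      using has_join_tree_remove_leaf[OF psubset.prems 3] .
    moreover have "P (N - {e}) lab'" if "has_join_tree (N - {e}) lab'" for lab'
      using psubset.IH[OF _ that] \<open>e \<in> N\<close> by blast
    ultimately show ?thesis by (rule assms(5)[OF psubset.hyps])
  qed (use assms(3,4) in auto)
qed

lemma strongly_independent_extend_leaf:
  assumes "strongly_independent I (lab ` (N - {e}))" "finite I" "I \<subseteq> \<Union>(lab ` (N - {e}))"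
    and "lab e \<inter> \<Union>(lab ` (N - {e})) \<subseteq> lab f" "f \<in> N" "f \<noteq> e"
  shows "strongly_independent I (lab ` N)"
proof -
  have "I \<inter> lab e \<subseteq> I \<inter> lab f" using assms(3,4) by blast
  then have "card (I \<inter> lab e) \<le> card (I \<inter> lab f)" using assms(2) by (intro card_mono) auto
  also have "\<dots> \<le> 1" using assms(1,5,6) by (auto simp: strongly_independent_def)
  finally show ?thesis using assms(1) by (auto simp: strongly_independent_def)
qed

lemma strongly_independent_insert_private:
  assumes "strongly_independent I (lab ` (N - {e}))" "I \<inter> lab e = {}"
    and "p \<in> lab e" "p \<notin> \<Union>(lab ` (N - {e}))"
  shows "strongly_independent (insert p I) (lab ` N)"
  unfolding strongly_independent_def
proof
  fix X assume "X \<in> lab ` N"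
  then obtain n where "n \<in> N" "X = lab n" by blast
  show "card (insert p I \<inter> X) \<le> 1"
  proof (cases "n = e")
    case True
    then have "insert p I \<inter> X = {p}" using assms(2,3) \<open>X = lab n\<close> by auto
    then show ?thesis by simp
  next
    case False
    then have "insert p I \<inter> X = I \<inter> X" using assms(4) \<open>n \<in> N\<close> \<open>X = lab n\<close> by auto
    then show ?thesis using assms(1) False \<open>n \<in> N\<close> \<open>X = lab n\<close>
      by (auto simp: strongly_independent_def)
  qed
qed

lemma has_join_tree_hitting_independent_set:
  assumes "finite N" "has_join_tree N lab"
  shows "\<exists>I. finite I \<and> I \<subseteq> \<Union>(lab ` N) \<and> strongly_independent I (lab ` N) \<and>
    (\<forall>X\<in>red (lab ` N). X \<noteq> {} \<longrightarrow> I \<inter> X \<noteq> {})"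
  using assms
proof (induction rule: has_join_tree_induct)
  case (empty lab)
  show ?case by (auto simp: strongly_independent_def red_def)
next
  case (singleton n lab)
  show ?case
  proof (cases "lab n = {}")
    case True
    then show ?thesis by (intro exI[of _ "{}"]) (auto simp: strongly_independent_def red_def)
  next
    case False
    then obtain p where "p \<in> lab n" by blast
    then have "{p} \<inter> lab n = {p}" by blast
    then show ?thesis
      using \<open>p \<in> lab n\<close> by (intro exI[of _ "{p}"]) (auto simp: strongly_independent_def red_def)
  qed
next
  case (leaf N lab e f)
  obtain I where I: "finite I" "I \<subseteq> \<Union>(lab ` (N - {e}))" "strongly_independent I (lab ` (N - {e}))"
    and hits: "\<forall>X\<in>red (lab ` (N - {e})). X \<noteq> {} \<longrightarrow> I \<inter> X \<noteq> {}"
    using leaf.IH[OF leaf.hyps(5)] by iprover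
  have hits_remaining: "I \<inter> X \<noteq> {}" if "X \<in> red (lab ` N)" "X \<in> lab ` (N - {e})" "X \<noteq> {}" for X
    using hits red_mono_member[OF that(1,2)] that(3) by blast
  txt \<open>A leaf label missed by \<open>I\<close> either has a private vertex, which is added to \<open>I\<close>, or lies
    in the label of its neighbour and so is not a new maximal label.\<close>
  show ?case
  proof (cases "I \<inter> lab e = {} \<and> \<not> lab e \<subseteq> \<Union>(lab ` (N - {e}))")
    case True
    then obtain p where p: "p \<in> lab e" "p \<notin> \<Union>(lab ` (N - {e}))" by blast
    have "insert p I \<inter> X \<noteq> {}" if "X \<in> red (lab ` N)" "X \<noteq> {}" for X
      using hits_remaining[OF that(1) _ that(2)] p(1) that(1) by (cases "X = lab e") (auto simp: red_def)
    moreover have "strongly_independent (insert p I) (lab ` N)"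
      using strongly_independent_insert_private[OF I(3)] True p by blast
    ultimately show ?thesis using I(1,2) p(1) leaf.hyps(2) by (intro exI[of _ "insert p I"]) auto
  next
    case False
    have "I \<inter> X \<noteq> {}" if X: "X \<in> red (lab ` N)" "X \<noteq> {}" for X
    proof (cases "X \<in> lab ` (N - {e})")
      case outside: False
      then have "X = lab e" using X(1) by (auto simp: red_def)
      moreover have "\<not> lab e \<subseteq> lab f"
      proof
        assume "lab e \<subseteq> lab f"
        then have "lab f = X" using X(1) \<open>X = lab e\<close> leaf.hyps(3) by (auto simp: red_def)
        then show False using outside leaf.hyps(3,4) by auto
      qed
      ultimately show ?thesis using False leaf.hyps(6) by blast
    qed (use hits_remaining X in blast)
    moreover have "strongly_independent I (lab ` N)"
      using strongly_independent_extend_leaf[OF I(3,1,2) leaf.hyps(6,3)] leaf.hyps(4) by blast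
    ultimately show ?thesis using I(1,2) by (intro exI[of _ I]) auto
  qed
qed

lemma has_join_tree_independent_set_cover:
  assumes "finite N" "has_join_tree N lab"
  shows "\<exists>I C. finite I \<and> I \<subseteq> \<Union>(lab ` N) \<and> strongly_independent I (lab ` N) \<and>
    C \<subseteq> N \<and> \<Union>(lab ` C) = \<Union>(lab ` N) \<and> card C \<le> card I"
  using assms
proof (induction rule: has_join_tree_induct)
  case (empty lab)
  show ?case by (auto simp: strongly_independent_def)
next
  case (singleton n lab)
  show ?case
  proof (cases "lab n = {}")
    case True
    then show ?thesis by (intro exI[of _ "{}"]) (auto simp: strongly_independent_def)
  next
    case False
    then obtain p where "p \<in> lab n" by blast
    then have "{p} \<inter> lab n = {p}" by blast
    then show ?thesis
      using \<open>p \<in> lab n\<close> by (intro exI[of _ "{p}"] exI[of _ "{n}"]) (auto simp: strongly_independent_def)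
  qed
next
  case (leaf N lab e f)
  show ?case
  proof (cases "lab e \<subseteq> \<Union>(lab ` (N - {e}))")
    case True
    obtain I C where I: "finite I" "I \<subseteq> \<Union>(lab ` (N - {e}))" "strongly_independent I (lab ` (N - {e}))"
      and C: "C \<subseteq> N - {e}" "\<Union>(lab ` C) = \<Union>(lab ` (N - {e}))" "card C \<le> card I"
      using leaf.IH[OF leaf.hyps(5)] by iprover
    have "\<Union>(lab ` N) = \<Union>(lab ` (N - {e}))" using True leaf.hyps(2) by blast
    moreover have "strongly_independent I (lab ` N)"
      using strongly_independent_extend_leaf[OF I(3,1,2) leaf.hyps(6,3)] leaf.hyps(4) by blast
    ultimately show ?thesis using I(1,2) C by (intro exI[of _ I] exI[of _ C]) auto
  next
    case False
    then obtain p where p: "p \<in> lab e" "p \<notin> \<Union>(lab ` (N - {e}))" by blast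
    txt \<open>Only \<open>e\<close> covers \<open>p\<close>, so \<open>e\<close> joins the cover; the remaining labels lose \<open>lab e\<close>,
      which keeps the independent set of the smaller family away from \<open>p\<close>.\<close>
    define lab' where "lab' n = lab n - lab e" for n
    have "lab' = (\<lambda>n. - lab e \<inter> lab n)" by (auto simp: lab'_def)
    then have lab'_tree: "has_join_tree (N - {e}) lab'"
      using has_join_tree_restrict[OF leaf.hyps(5)] by simp
    obtain I C where I: "finite I" "I \<subseteq> \<Union>(lab' ` (N - {e}))" "strongly_independent I (lab' ` (N - {e}))"
      and C: "C \<subseteq> N - {e}" "\<Union>(lab' ` C) = \<Union>(lab' ` (N - {e}))" "card C \<le> card I"
      using leaf.IH[OF lab'_tree] by iprover
    have disjoint: "I \<inter> lab e = {}" using I(2) by (auto simp: lab'_def)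
    then have "I \<inter> lab' n = I \<inter> lab n" for n by (auto simp: lab'_def)
    then have "strongly_independent I (lab ` (N - {e}))"
      using I(3) by (simp add: strongly_independent_def)
    then have "strongly_independent (insert p I) (lab ` N)"
      by (rule strongly_independent_insert_private[OF _ disjoint p])
    moreover have "\<Union>(lab ` insert e C) = \<Union>(lab ` N)" "insert p I \<subseteq> \<Union>(lab ` N)"
    proof -
      have "\<Union>(lab' ` M) = \<Union>(lab ` M) - lab e" for M by (auto simp: lab'_def)
      moreover have "\<Union>(lab ` N) = lab e \<union> \<Union>(lab ` (N - {e}))" using leaf.hyps(2) by blast
      ultimately show "\<Union>(lab ` insert e C) = \<Union>(lab ` N)" "insert p I \<subseteq> \<Union>(lab ` N)"
        using C(2) I(2) p(1) by auto
    qed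
    moreover have "card (insert e C) \<le> card (insert p I)"
    proof -
      have "finite C" using C(1) leaf.hyps(1) finite_subset by blast
      moreover have "p \<notin> I" using disjoint p(1) by blast
      ultimately show ?thesis using C(3) I(1) by (simp add: card_insert_if)
    qed
    moreover have "insert e C \<subseteq> N" using C(1) leaf.hyps(2) by blast
    ultimately show ?thesis using I(1) by blast
  qed
qed

section \<open>Fractional packings and covers\<close>

lemma frac_edge_packing_sum_le_card:
  assumes "finite G" "finite I" "\<forall>X\<in>G. I \<inter> X \<noteq> {}" "frac_edge_packing G w"
  shows "sum w G \<le> real (card I)"
proof -
  have w_nonneg: "\<forall>X\<in>G. 0 \<le> w X" using assms(4) by (simp add: frac_edge_packing_def)
  have "sum w G \<le> (\<Sum>X\<in>G. card (I \<inter> X) * w X)"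
  proof (rule sum_mono)
    fix X assume "X \<in> G"
    then have "1 \<le> card (I \<inter> X)" using assms(2,3) by (simp add: Suc_le_eq card_gt_0_iff)
    then show "w X \<le> card (I \<inter> X) * w X"
      using mult_right_mono[of 1 "card (I \<inter> X)" "w X"] w_nonneg \<open>X \<in> G\<close> by simp
  qed
  also have "\<dots> = (\<Sum>X\<in>G. \<Sum>t\<in>{t\<in>I. t \<in> X}. w X)" by (simp add: Int_def)
  also have "\<dots> = (\<Sum>t\<in>I. \<Sum>X\<in>{X\<in>G. t \<in> X}. w X)" using assms(1,2) by (rule sum.swap_restrict)
  also have "\<dots> \<le> (\<Sum>t\<in>I. 1)"
  proof (rule sum_mono)
    fix t
    show "(\<Sum>X\<in>{X\<in>G. t \<in> X}. w X) \<le> 1"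
    proof (cases "t \<in> hverts G")
      case False
      then have "{X\<in>G. t \<in> X} = {}" by (auto simp: hverts_def)
      then show ?thesis by (metis sum.empty zero_le_one)
    qed (use assms(4) in \<open>simp add: frac_edge_packing_def\<close>)
  qed
  finally show ?thesis by simp
qed

lemma card_le_frac_edge_cover_sum:
  assumes "finite E" "finite I" "I \<subseteq> hverts E" "strongly_independent I E" "frac_edge_cover E w"
  shows "real (card I) \<le> sum w E"
proof -
  have w_nonneg: "\<forall>e\<in>E. 0 \<le> w e" using assms(5) by (simp add: frac_edge_cover_def)
  have "card I = (\<Sum>t\<in>I. 1::real)" by simp
  also have "\<dots> \<le> (\<Sum>t\<in>I. \<Sum>e\<in>{e\<in>E. t \<in> e}. w e)"
    using assms(3,5) by (intro sum_mono) (auto simp: frac_edge_cover_def)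
  also have "\<dots> = (\<Sum>e\<in>E. \<Sum>t\<in>{t\<in>I. t \<in> e}. w e)" using assms(2,1) by (rule sum.swap_restrict)
  also have "\<dots> = (\<Sum>e\<in>E. card (I \<inter> e) * w e)" by (simp add: Int_def)
  also have "\<dots> \<le> sum w E"
  proof (rule sum_mono)
    fix e assume "e \<in> E"
    then have "card (I \<inter> e) \<le> 1" using assms(4) by (simp add: strongly_independent_def)
    then show "card (I \<inter> e) * w e \<le> w e"
      using w_nonneg \<open>e \<in> E\<close> by (simp add: mult_left_le_one_le)
  qed
  finally show ?thesis .
qed

lemma tau_star_le_card:
  assumes "finite G" "finite I" "\<forall>X\<in>G. I \<inter> X \<noteq> {}"
  shows "tau_star G \<le> card I"
  unfolding tau_star_def
proof (rule cSup_least)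
  have "frac_edge_packing G (\<lambda>_. 0)" by (simp add: frac_edge_packing_def)
  then show "{sum w G | w. frac_edge_packing G w} \<noteq> {}" by blast
qed (use frac_edge_packing_sum_le_card[OF assms] in blast)

lemma card_le_tau_star_singletons:
  assumes "finite I"
  shows "card I \<le> tau_star ((\<lambda>t. {t}) ` I)"
  unfolding tau_star_def
proof (rule cSup_upper)
  let ?G = "(\<lambda>t. {t}) ` I"
  have "frac_edge_packing ?G (\<lambda>_. 1)"
  proof -
    have "{X\<in>?G. t \<in> X} = {{t}}" if "t \<in> hverts ?G" for t using that by (auto simp: hverts_def)
    then show ?thesis by (simp add: frac_edge_packing_def)
  qed
  moreover have "sum (\<lambda>_. 1) ?G = card I" by (simp add: card_image)
  ultimately show "real (card I) \<in> {sum w ?G | w. frac_edge_packing ?G w}" by force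
  have "\<forall>X\<in>?G. I \<inter> X \<noteq> {}" by auto
  then show "bdd_above {sum w ?G | w. frac_edge_packing ?G w}"
    using frac_edge_packing_sum_le_card[OF finite_imageI[OF assms] assms] unfolding bdd_above_def by blast
qed

lemma card_le_rho_star:
  assumes "finite E" "finite I" "I \<subseteq> hverts E" "strongly_independent I E"
  shows "card I \<le> rho_star E"
  unfolding rho_star_def
proof (rule cInf_greatest)
  have "frac_edge_cover E (\<lambda>_. 1)"
  proof -
    have "{e\<in>E. v \<in> e} \<noteq> {}" if "v \<in> hverts E" for v using that by (auto simp: hverts_def)
    then have "1 \<le> card {e\<in>E. v \<in> e}" if "v \<in> hverts E" for v
      using that assms(1) by (simp add: Suc_le_eq card_gt_0_iff)
    then show ?thesis by (simp add: frac_edge_cover_def)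
  qed
  then show "{sum w E | w. frac_edge_cover E w} \<noteq> {}" by blast
qed (use card_le_frac_edge_cover_sum[OF assms] in blast)

lemma rho_star_le_card:
  assumes "finite E" "C \<subseteq> E" "\<Union>C = hverts E"
  shows "rho_star E \<le> card C"
  unfolding rho_star_def
proof (rule cInf_lower)
  let ?w = "\<lambda>e. if e \<in> C then 1 else 0 :: real"
  have "1 \<le> (\<Sum>e\<in>{e\<in>E. v \<in> e}. ?w e)" if "v \<in> hverts E" for v
  proof -
    have "v \<in> \<Union>C" using that assms(3) by simp
    then obtain c where "c \<in> C" "v \<in> c" by blast
    then have "?w c \<le> (\<Sum>e\<in>{e\<in>E. v \<in> e}. ?w e)"
      using assms(1,2) by (intro member_le_sum) auto
    then show ?thesis using \<open>c \<in> C\<close> by simp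
  qed
  then have "frac_edge_cover E ?w" by (simp add: frac_edge_cover_def)
  moreover have "sum ?w E = card C"
    using assms(1,2) by (simp add: sum.If_cases Int_absorb1)
  ultimately show "real (card C) \<in> {sum w E | w. frac_edge_cover E w}" by force
  show "bdd_below {sum w E | w. frac_edge_cover E w}"
    by (auto simp: bdd_below_def frac_edge_cover_def intro!: exI[of _ 0] sum_nonneg)
qed

lemma tau_star_red_induced_le_rho_star:
  assumes "finite E" "alpha_acyclic E"
  shows "tau_star (red (induced E S)) \<le> rho_star E"
proof -
  have "has_join_tree E (\<lambda>e. S \<inter> e)"
    using has_join_tree_restrict[OF alpha_acyclic_has_join_tree[OF assms(2)]] by simp
  from has_join_tree_hitting_independent_set[OF assms(1) this]
  obtain I where I: "finite I" "I \<subseteq> \<Union>((\<lambda>e. S \<inter> e) ` E)"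
      "strongly_independent I ((\<lambda>e. S \<inter> e) ` E)"
    and hits: "\<forall>X\<in>red ((\<lambda>e. S \<inter> e) ` E). X \<noteq> {} \<longrightarrow> I \<inter> X \<noteq> {}"
    by iprover
  have sub: "red (induced E S) \<subseteq> red ((\<lambda>e. S \<inter> e) ` E) - {{}}" by (rule red_induced_subset)
  then have "red (induced E S) \<subseteq> (\<lambda>e. S \<inter> e) ` E" using red_subset by blast
  then have "finite (red (induced E S))" using finite_subset finite_imageI[OF assms(1)] by blast
  moreover have "\<forall>X\<in>red (induced E S). I \<inter> X \<noteq> {}" using sub hits by blast
  ultimately have "tau_star (red (induced E S)) \<le> card I" by (rule tau_star_le_card[OF _ I(1)])
  also have "card I \<le> rho_star E"
  proof (rule card_le_rho_star[OF assms(1) I(1)])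
    show "I \<subseteq> hverts E" using I(2) by (auto simp: hverts_def)
    have "I \<inter> e = I \<inter> (S \<inter> e)" for e using I(2) by blast
    then show "strongly_independent I E" using I(3) by (simp add: strongly_independent_def)
  qed
  finally show ?thesis .
qed

lemma rho_star_le_tau_star_red_induced:
  assumes "finite E" "alpha_acyclic E"
  obtains S where "S \<subseteq> hverts E" "rho_star E \<le> tau_star (red (induced E S))"
proof -
  obtain I C where I: "finite I" "I \<subseteq> hverts E" "strongly_independent I E"
    and C: "C \<subseteq> E" "\<Union>C = hverts E" "card C \<le> card I"
    using has_join_tree_independent_set_cover[OF assms(1) alpha_acyclic_has_join_tree[OF assms(2)]]
    by (auto simp: hverts_def)
  have "rho_star E \<le> card C" using rho_star_le_card[OF assms(1) C(1,2)] .
  also have "\<dots> \<le> card I" using C(3) by simp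
  also have "\<dots> \<le> tau_star (red (induced E I))"
    using card_le_tau_star_singletons[OF I(1)]
    by (simp add: induced_strongly_independent_eq_singletons[OF I] red_singletons)
  finally show ?thesis using that I(2) by blast
qed

theorem lemma3p7:
  fixes E :: "'a set set"
  assumes "finite E"
    and "\<forall>e\<in>E. finite e"
    and "alpha_acyclic E"
  shows "kappa E = rho_star E"
proof -
  obtain S where S: "S \<subseteq> hverts E" "rho_star E \<le> tau_star (red (induced E S))"
    using rho_star_le_tau_star_red_induced[OF assms(1,3)] .
  have upper: "tau_star (red (induced E S')) \<le> rho_star E" for S'
    using tau_star_red_induced_le_rho_star[OF assms(1,3)] .
  have "finite (hverts E)" using assms(1,2) by (simp add: hverts_def)
  then have "finite {tau_star (red (induced E S)) | S. S \<subseteq> hverts E}" by simp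
  moreover have "rho_star E \<in> {tau_star (red (induced E S)) | S. S \<subseteq> hverts E}"
    using S upper[of S] by force
  ultimately show ?thesis unfolding kappa_def using upper by (intro Max_eqI) auto
qed

end
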